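(* Let $L$ be a PG-lattice and $M$ a faithful multiplication PG-lattice $L$-module with $I_M$ compact, and let $\delta_1(A)=(\sqrt{(A:I_M)})I_M$ for $A\in M$. If $\delta$ is an expansion function on $M$ such that $\delta(A)\leqslant\delta_1(A)$ for all $A\in M$, then $\delta(P)=\delta_1(P)$ for every $\delta$-primary element $P\in M$.
   Context: $L$ is a multiplicative lattice (complete lattice with commutative, associative multiplication distributing over arbitrary joins, identity $1$, least $0$), compactly generated, $1$ compact, finite products of compact elements compact; $L_\ast$ = compact elements. An $L$-module is a complete lattice $M$ (least $O_M$, greatest $I_M$) with product $aB\in M$ satisfying $(\bigvee a_\alpha)A=\bigvee(a_\alpha A)$, $a(\bigvee A_\alpha)=\bigvee(aA_\alpha)$, $(ab)A=a(bA)$, $1A=A$, $0A=O_M$. $(A:B)=\bigvee\{x\in L:xB\leqslant A\}$ for $A,B\in M$; $\sqrt a=\bigvee\{x\in L_\ast:x^n\leqslant a\text{ for some }n\in\mathbb Z_+\}$. $e\in L$ is principal if $a\wedge be=((a:e)\wedge b)e$ and $(ae\vee b):e=(b:e)\vee a$ for all $a,b\in L$; $L$ is a PG-lattice if every element is a join of principal elements. $N\in M$ is principal if $(b\wedge(B:N))N=bN\wedge B$ and $b\vee(B:N)=((bN\vee B):N)$ for all $b\in L,B\in M$; $M$ is a PG-lattice module if every element is a join of principal elements. $M$ is faithful if $(O_M:I_M)=0$; a multiplication module if every $N\in M$ is $aI_M$ for some $a\in L$. Proper means $<I_M$. An expansion function on $M$ is a map $\delta:M\to M$ with $A\leqslant\delta(A)$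 and $A\leqslant B\Rightarrow\delta(A)\leqslant\delta(B)$; a proper $P\in M$ is $\delta$-primary if for all $a\in L$, $A\in M$: $aA\leqslant P$ implies $A\leqslant P$ or $aI_M\leqslant\delta(P)$. *)

theory Defs
  imports Main
begin

text \<open>The multiplicative lattice L is a complete lattice of type 'a with an explicit
  multiplication mult; its identity 1 is the greatest element top and 0 is bot.\<close>

definition compact_el :: "'b::complete_lattice \<Rightarrow> bool" where
  "compact_el c \<longleftrightarrow> (\<forall>S. c \<le> Sup S \<longrightarrow> (\<exists>F. finite F \<and> F \<subseteq> S \<and> c \<le> Sup F))"

definition multiplicative_lattice :: "('a::complete_lattice \<Rightarrow> 'a \<Rightarrow> 'a) \<Rightarrow> bool" where
  "multiplicative_lattice mult \<longleftrightarrow>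
     (\<forall>a b. mult a b = mult b a) \<and>
     (\<forall>a b c. mult (mult a b) c = mult a (mult b c)) \<and>
     (\<forall>a S. mult a (Sup S) = Sup (mult a ` S)) \<and>
     (\<forall>a. mult a top = a) \<and>
     (\<forall>a::'a. a = Sup {x. compact_el x \<and> x \<le> a}) \<and>
     compact_el (top::'a) \<and>
     (\<forall>a b. compact_el a \<longrightarrow> compact_el b \<longrightarrow> compact_el (mult a b))"

definition lattice_module ::
  "('a::complete_lattice \<Rightarrow> 'a \<Rightarrow> 'a) \<Rightarrow> ('a \<Rightarrow> 'm::complete_lattice \<Rightarrow> 'm) \<Rightarrow> bool" where
  "lattice_module mult act \<longleftrightarrow>
     (\<forall>S A. act (Sup S) A = Sup ((\<lambda>a. act a A) ` S)) \<and>
     (\<forall>a T. act a (Sup T) = Sup (act a ` T)) \<and>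
     (\<forall>a b A. act (mult a b) A = act a (act b A)) \<and>
     (\<forall>A. act top A = A) \<and>
     (\<forall>A. act bot A = bot)"

definition lres :: "('a::complete_lattice \<Rightarrow> 'a \<Rightarrow> 'a) \<Rightarrow> 'a \<Rightarrow> 'a \<Rightarrow> 'a" where
  "lres mult a e = Sup {x. mult x e \<le> a}"

definition mres :: "('a::complete_lattice \<Rightarrow> 'm::complete_lattice \<Rightarrow> 'm) \<Rightarrow> 'm \<Rightarrow> 'm \<Rightarrow> 'a" where
  "mres act A B = Sup {x. act x B \<le> A}"

fun lpow :: "('a::complete_lattice \<Rightarrow> 'a \<Rightarrow> 'a) \<Rightarrow> 'a \<Rightarrow> nat \<Rightarrow> 'a" where
  "lpow mult x 0 = top"
| "lpow mult x (Suc n) = mult x (lpow mult x n)"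

definition lrad :: "('a::complete_lattice \<Rightarrow> 'a \<Rightarrow> 'a) \<Rightarrow> 'a \<Rightarrow> 'a" where
  "lrad mult a = Sup {x. compact_el x \<and> (\<exists>n. 0 < n \<and> lpow mult x n \<le> a)}"

definition principal_L :: "('a::complete_lattice \<Rightarrow> 'a \<Rightarrow> 'a) \<Rightarrow> 'a \<Rightarrow> bool" where
  "principal_L mult e \<longleftrightarrow>
     (\<forall>a b. inf a (mult b e) = mult (inf (lres mult a e) b) e) \<and>
     (\<forall>a b. lres mult (sup (mult a e) b) e = sup (lres mult b e) a)"

definition PG_lattice :: "('a::complete_lattice \<Rightarrow> 'a \<Rightarrow> 'a) \<Rightarrow> bool" where
  "PG_lattice mult \<longleftrightarrow> (\<forall>a. \<exists>S. (\<forall>e\<in>S. principal_L mult e) \<and> a = Sup S)"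

definition principal_M :: "('a::complete_lattice \<Rightarrow> 'm::complete_lattice \<Rightarrow> 'm) \<Rightarrow> 'm \<Rightarrow> bool" where
  "principal_M act N \<longleftrightarrow>
     (\<forall>b B. act (inf b (mres act B N)) N = inf (act b N) B) \<and>
     (\<forall>b B. sup b (mres act B N) = mres act (sup (act b N) B) N)"

definition PG_module :: "('a::complete_lattice \<Rightarrow> 'm::complete_lattice \<Rightarrow> 'm) \<Rightarrow> bool" where
  "PG_module act \<longleftrightarrow> (\<forall>A. \<exists>S. (\<forall>N\<in>S. principal_M act N) \<and> A = Sup S)"

definition faithful :: "('a::complete_lattice \<Rightarrow> 'm::complete_lattice \<Rightarrow> 'm) \<Rightarrow> bool" where
  "faithful act \<longleftrightarrow> mres act bot top = bot"

definition multiplication_module :: "('a::complete_lattice \<Rightarrow> 'm::complete_lattice \<Rightarrow> 'm) \<Rightarrow> bool" where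
  "multiplication_module act \<longleftrightarrow> (\<forall>N. \<exists>a. N = act a top)"

definition expansion_function :: "('m::complete_lattice \<Rightarrow> 'm) \<Rightarrow> bool" where
  "expansion_function \<delta> \<longleftrightarrow> (\<forall>A. A \<le> \<delta> A) \<and> (\<forall>A B. A \<le> B \<longrightarrow> \<delta> A \<le> \<delta> B)"

definition delta_primary ::
  "('a::complete_lattice \<Rightarrow> 'm::complete_lattice \<Rightarrow> 'm) \<Rightarrow> ('m \<Rightarrow> 'm) \<Rightarrow> 'm \<Rightarrow> bool" where
  "delta_primary act \<delta> P \<longleftrightarrow> P < top \<and>
     (\<forall>a A. act a A \<le> P \<longrightarrow> A \<le> P \<or> act a top \<le> \<delta> P)"

definition delta1 :: "('a::complete_lattice \<Rightarrow> 'a \<Rightarrow> 'a) \<Rightarrow> ('a \<Rightarrow> 'm::complete_lattice \<Rightarrow> 'm) \<Rightarrow> 'm \<Rightarrow> 'm" where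
  "delta1 mult act A = act (lrad mult (mres act A top)) top"

end

theory Submission
  imports Defs
begin

text \<open>If \<open>x\<^sup>n I\<^sub>M \<le> P\<close> with \<open>n > 0\<close>, peeling off one factor \<open>x\<close> at a time with the
  \<open>\<delta>\<close>-primary property gives \<open>x I\<^sub>M \<le> \<delta>(P)\<close>.  Hence every compact element of
  \<open>\<surd>(P:I\<^sub>M)\<close> multiplies \<open>I\<^sub>M\<close> into \<open>\<delta>(P)\<close>, so \<open>\<delta>\<^sub>1(P) \<le> \<delta>(P)\<close>; the reverse inequality
  is a hypothesis.\<close>

lemma act_mono_left:
  assumes "lattice_module mult act" and "a \<le> b"
  shows "act a A \<le> act b A"
proof -
  have "act (Sup {a, b}) A = Sup ((\<lambda>x. act x A) ` {a, b})"
    using assms(1) unfolding lattice_module_def by blast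
  moreover have "Sup {a, b} = b"
    using assms(2) by (simp add: sup_absorb2)
  ultimately have "act b A = sup (act a A) (act b A)"
    by simp
  then show ?thesis
    using sup_ge1 by metis
qed

lemma act_mres_le:
  assumes "lattice_module mult act"
  shows "act (mres act A B) B \<le> A"
proof -
  have "act (mres act A B) B = Sup ((\<lambda>x. act x B) ` {x. act x B \<le> A})"
    using assms unfolding lattice_module_def mres_def by blast
  also have "\<dots> \<le> A"
    by (auto intro: Sup_least)
  finally show ?thesis .
qed

lemma act_lpow_Suc:
  assumes "lattice_module mult act"
  shows "act (lpow mult x (Suc n)) A = act x (act (lpow mult x n) A)"
  using assms unfolding lattice_module_def by simp

lemma delta_primary_lpow_le:
  assumes lm: "lattice_module mult act"
    and ex: "expansion_function \<delta>"
    and dp: "delta_primary act \<delta> P"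
  shows "act (lpow mult x (Suc n)) top \<le> P \<Longrightarrow> act x top \<le> \<delta> P"
proof (induction n)
  case 0
  have "act x top \<le> P"
    using "0.prems" lm unfolding lattice_module_def by simp
  also have "P \<le> \<delta> P"
    using ex unfolding expansion_function_def by blast
  finally show ?case .
next
  case (Suc n)
  have "act x (act (lpow mult x (Suc n)) top) \<le> P"
    using Suc.prems act_lpow_Suc[OF lm] by metis
  then have "act (lpow mult x (Suc n)) top \<le> P \<or> act x top \<le> \<delta> P"
    using dp unfolding delta_primary_def by blast
  then show ?case
    using Suc.IH by blast
qed

lemma delta1_le_delta_primary:
  assumes lm: "lattice_module mult act"
    and ex: "expansion_function \<delta>"
    and dp: "delta_primary act \<delta> P"
  shows "delta1 mult act P \<le> \<delta> P"
proof -
  define S where "S = {x. compact_el x \<and> (\<exists>n. 0 < n \<and> lpow mult x n \<le> mres act P top)}"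
  have "delta1 mult act P = Sup ((\<lambda>x. act x top) ` S)"
    using lm unfolding delta1_def lrad_def S_def lattice_module_def by blast
  also have "\<dots> \<le> \<delta> P"
  proof (rule Sup_least)
    fix y
    assume "y \<in> (\<lambda>x. act x top) ` S"
    then obtain x n where y: "y = act x top" and "0 < n"
      and radical: "lpow mult x n \<le> mres act P top"
      unfolding S_def by blast
    then obtain m where n: "n = Suc m"
      using gr0_conv_Suc by blast
    have "act (lpow mult x n) top \<le> act (mres act P top) top"
      using act_mono_left[OF lm radical] .
    also have "\<dots> \<le> P"
      using act_mres_le[OF lm] .
    finally show "y \<le> \<delta> P"
      using delta_primary_lpow_le[OF lm ex dp] y n by blast
  qed
  finally show ?thesis .
qed

theorem theorem2p13:
  fixes mult :: "'a::complete_lattice \<Rightarrow> 'a \<Rightarrow> 'a"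
    and act :: "'a \<Rightarrow> 'm::complete_lattice \<Rightarrow> 'm"
    and \<delta> :: "'m \<Rightarrow> 'm"
    and P :: 'm
  assumes "multiplicative_lattice mult"
    and "PG_lattice mult"
    and "lattice_module mult act"
    and "faithful act"
    and "multiplication_module act"
    and "PG_module act"
    and "compact_el (top::'m)"
    and "expansion_function \<delta>"
    and "\<forall>A. \<delta> A \<le> delta1 mult act A"
    and "delta_primary act \<delta> P"
  shows "\<delta> P = delta1 mult act P"
proof (rule antisym)
  show "\<delta> P \<le> delta1 mult act P"
    using assms(9) by blast
  show "delta1 mult act P \<le> \<delta> P"
    using delta1_le_delta_primary[OF assms(3) assms(8) assms(10)] .
qed

end
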